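(* Let $a<b<c$ be elements of $\mathcal{C}_n$. Every element $\alpha$ of the interior of the triangle $\triangle^{(n)}\{a,b,c\}$ can be written in a unique way as $\alpha=\beta+\gamma$ with $\beta\in\mathcal{STR}^{(n)}\{a,b\}$ and $\gamma\in\mathcal{STR}^{(n)}\{a,c\}$.
   Context: $\mathcal{C}_n=\{0,1,\dots,n-1\}$ with its usual order; $\widehat{\mathcal{E}}_{\mathcal{C}_n}$ is the set of all order-preserving maps $\mathcal{C}_n\to\mathcal{C}_n$ (not required to fix $0$), with addition $(\beta+\gamma)(x)=\max(\beta(x),\gamma(x))$. The triangle $\triangle^{(n)}\{a,b,c\}$ is the set of $\alpha\in\widehat{\mathcal{E}}_{\mathcal{C}_n}$ with image contained in $\{a,b,c\}$; the string $\mathcal{STR}^{(n)}\{x,y\}$ (for $x<y$) is the set of $\alpha\in\widehat{\mathcal{E}}_{\mathcal{C}_n}$ with image contained in $\{x,y\}$. The interior of the triangle is the set of its elements not lying in any of the strings $\mathcal{STR}^{(n)}\{a,b\}$, $\mathcal{STR}^{(n)}\{a,c\}$, $\mathcal{STR}^{(n)}\{b,c\}$, i.e. the $\alpha$ with image exactly $\{a,b,c\}$. *)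

theory Defs
  imports Main
begin

text \<open>Elements of C_n are the naturals 0..n-1. Maps C_n -> C_n are represented as
  functions nat => nat that are extensional: value 0 outside {0..<n}, so that
  equality of maps is equality of HOL functions.\<close>

definition Ehat :: "nat \<Rightarrow> (nat \<Rightarrow> nat) set" where
  "Ehat n = {f. (\<forall>x<n. f x < n) \<and> (\<forall>x y. x \<le> y \<and> y < n \<longrightarrow> f x \<le> f y)
                 \<and> (\<forall>x\<ge>n. f x = 0)}"

definition max_add :: "(nat \<Rightarrow> nat) \<Rightarrow> (nat \<Rightarrow> nat) \<Rightarrow> (nat \<Rightarrow> nat)" where
  "max_add \<beta> \<gamma> = (\<lambda>x. max (\<beta> x) (\<gamma> x))"

definition str_set :: "nat \<Rightarrow> nat \<Rightarrow> nat \<Rightarrow> (nat \<Rightarrow> nat) set" where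
  "str_set n x y = {\<alpha> \<in> Ehat n. \<alpha> ` {0..<n} \<subseteq> {x, y}}"

definition triangle :: "nat \<Rightarrow> nat \<Rightarrow> nat \<Rightarrow> nat \<Rightarrow> (nat \<Rightarrow> nat) set" where
  "triangle n a b c = {\<alpha> \<in> Ehat n. \<alpha> ` {0..<n} \<subseteq> {a, b, c}}"

definition triangle_interior :: "nat \<Rightarrow> nat \<Rightarrow> nat \<Rightarrow> nat \<Rightarrow> (nat \<Rightarrow> nat) set" where
  "triangle_interior n a b c =
     triangle n a b c - (str_set n a b \<union> str_set n a c \<union> str_set n b c)"

end

theory Submission
  imports Defs
begin

text \<open>With \<beta> := min \<alpha> b and \<gamma> := c on the fibre of \<alpha> over c and a elsewhere, clearly
  \<alpha> = \<beta> + \<gamma>. Conversely, in any decomposition \<gamma> must take the value c exactly where \<alpha> does,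
  because \<beta> \<le> b < c; and where \<alpha> = c, \<beta> must be b, because some point y where \<alpha> = b
  (it exists since \<alpha> is interior) lies below it and \<beta> y = b already.\<close>

definition truncate_at :: "nat \<Rightarrow> nat \<Rightarrow> (nat \<Rightarrow> nat) \<Rightarrow> nat \<Rightarrow> nat" where
  "truncate_at n b \<alpha> = (\<lambda>x. if x < n then min (\<alpha> x) b else 0)"

definition peak_part :: "nat \<Rightarrow> nat \<Rightarrow> nat \<Rightarrow> (nat \<Rightarrow> nat) \<Rightarrow> nat \<Rightarrow> nat" where
  "peak_part n a c \<alpha> = (\<lambda>x. if x < n then (if \<alpha> x = c then c else a) else 0)"

lemma Ehat_mono:
  assumes "f \<in> Ehat n" and "x \<le> y" and "y < n"
  shows "f x \<le> f y"
  using assms unfolding Ehat_def by blast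

lemma Ehat_vanishes:
  assumes "f \<in> Ehat n" and "n \<le> x"
  shows "f x = 0"
  using assms unfolding Ehat_def by blast

lemma str_set_subset_Ehat: "str_set n u v \<subseteq> Ehat n"
  unfolding str_set_def by blast

lemma triangle_subset_Ehat: "triangle n a b c \<subseteq> Ehat n"
  unfolding triangle_def by blast

lemma str_setI:
  assumes "\<And>x. x < n \<Longrightarrow> \<beta> x = u \<or> \<beta> x = v" and "u < n" and "v < n"
    and "\<And>x y. x \<le> y \<Longrightarrow> y < n \<Longrightarrow> \<beta> x \<le> \<beta> y"
    and "\<And>x. n \<le> x \<Longrightarrow> \<beta> x = 0"
  shows "\<beta> \<in> str_set n u v"
proof -
  have "\<beta> x < n" if "x < n" for x
    using assms(1-3) that by blast
  then have "\<beta> \<in> Ehat n"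
    using assms(4,5) unfolding Ehat_def by blast
  moreover have "\<beta> ` {0..<n} \<subseteq> {u, v}"
    using assms(1) by (simp add: image_subset_iff)
  ultimately show ?thesis
    unfolding str_set_def by blast
qed

lemma str_setD:
  assumes "\<beta> \<in> str_set n u v" and "x < n"
  shows "\<beta> x = u \<or> \<beta> x = v"
  using assms unfolding str_set_def by (auto simp: image_subset_iff)

lemma triangleD:
  assumes "\<alpha> \<in> triangle n a b c" and "x < n"
  shows "\<alpha> x = a \<or> \<alpha> x = b \<or> \<alpha> x = c"
  using assms unfolding triangle_def by (auto simp: image_subset_iff)

lemma triangle_mono:
  assumes "\<alpha> \<in> triangle n a b c" and "x \<le> y" and "y < n"
  shows "\<alpha> x \<le> \<alpha> y"
  using assms triangle_subset_Ehat by (blast intro: Ehat_mono)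

lemma triangle_interior_hits_middle:
  assumes "\<alpha> \<in> triangle_interior n a b c"
  obtains y where "y < n" and "\<alpha> y = b"
proof -
  have "\<alpha> ` {0..<n} \<subseteq> {a, b, c}" and "\<not> \<alpha> ` {0..<n} \<subseteq> {a, c}"
    using assms unfolding triangle_interior_def triangle_def str_set_def by auto
  then show ?thesis
    using that by (auto simp: image_subset_iff)
qed

lemma truncate_at_in_str_set:
  assumes "\<alpha> \<in> triangle n a b c" and "a < b" and "b < c" and "b < n"
  shows "truncate_at n b \<alpha> \<in> str_set n a b"
proof (rule str_setI)
  fix x
  assume "x < n"
  then show "truncate_at n b \<alpha> x = a \<or> truncate_at n b \<alpha> x = b"
    using triangleD[OF assms(1) \<open>x < n\<close>] assms(2,3) by (auto simp: truncate_at_def)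
next
  fix x y
  assume "x \<le> y" and "y < n"
  then show "truncate_at n b \<alpha> x \<le> truncate_at n b \<alpha> y"
    using triangle_mono[OF assms(1)] by (simp add: truncate_at_def min.coboundedI1)
qed (use assms(2,4) in \<open>auto simp: truncate_at_def\<close>)

lemma peak_part_in_str_set:
  assumes "\<alpha> \<in> triangle n a b c" and "a < b" and "b < c" and "c < n"
  shows "peak_part n a c \<alpha> \<in> str_set n a c"
proof (rule str_setI)
  fix x y
  assume "x \<le> y" and "y < n"
  moreover have "\<alpha> y = c" if "\<alpha> x = c"
    using triangle_mono[OF assms(1) \<open>x \<le> y\<close> \<open>y < n\<close>] triangleD[OF assms(1) \<open>y < n\<close>]
      that assms(2,3) by auto
  ultimately show "peak_part n a c \<alpha> x \<le> peak_part n a c \<alpha> y"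
    using assms(2,3) by (auto simp: peak_part_def)
qed (use assms(2-4) in \<open>auto simp: peak_part_def\<close>)

lemma max_add_truncate_at_peak_part:
  assumes "\<alpha> \<in> triangle n a b c" and "a < b" and "b < c"
  shows "max_add (truncate_at n b \<alpha>) (peak_part n a c \<alpha>) = \<alpha>"
proof
  fix x
  show "max_add (truncate_at n b \<alpha>) (peak_part n a c \<alpha>) x = \<alpha> x"
  proof (cases "x < n")
    case True
    then show ?thesis
      using triangleD[OF assms(1) True] assms(2,3)
      by (auto simp: max_add_def truncate_at_def peak_part_def)
  next
    case False
    then show ?thesis
      using Ehat_vanishes[OF triangle_subset_Ehat[THEN subsetD, OF assms(1)]]
      by (simp add: max_add_def truncate_at_def peak_part_def)
  qed
qed

lemma max_add_str_set_unique:
  assumes \<beta>: "\<beta> \<in> str_set n a b" and \<gamma>: "\<gamma> \<in> str_set n a c"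
    and "a < b" and "b < c"
    and \<alpha>: "\<alpha> = max_add \<beta> \<gamma>"
    and "y < n" and "\<alpha> y = b"
  shows "\<beta> = truncate_at n b \<alpha>" and "\<gamma> = peak_part n a c \<alpha>"
proof -
  have \<beta>_mono: "\<beta> x \<le> \<beta> z" and \<gamma>_mono: "\<gamma> x \<le> \<gamma> z" if "x \<le> z" "z < n" for x z
    using that \<beta> \<gamma> str_set_subset_Ehat by (blast intro: Ehat_mono)+
  have \<beta>_vanishes: "\<beta> x = 0" and \<gamma>_vanishes: "\<gamma> x = 0" if "n \<le> x" for x
    using that \<beta> \<gamma> str_set_subset_Ehat by (blast intro: Ehat_vanishes)+
  have \<alpha>x: "\<alpha> x = max (\<beta> x) (\<gamma> x)" for x
    using \<alpha> by (simp add: max_add_def)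
  have \<beta>y: "\<beta> y = b"
    using str_setD[OF \<beta> \<open>y < n\<close>] str_setD[OF \<gamma> \<open>y < n\<close>] \<alpha>x[of y] \<open>\<alpha> y = b\<close>
      \<open>a < b\<close> \<open>b < c\<close> by (auto simp: max_def split: if_splits)
  have "\<beta> x = truncate_at n b \<alpha> x \<and> \<gamma> x = peak_part n a c \<alpha> x" for x
  proof (cases "x < n")
    case True
    note two_valued = str_setD[OF \<beta> True] str_setD[OF \<gamma> True]
    show ?thesis
    proof (cases "\<gamma> x = c")
      case True
      have "y < x"
      proof (rule ccontr)
        assume "\<not> y < x"
        then have "\<gamma> x \<le> \<gamma> y" and "\<gamma> y \<le> b"
          using \<gamma>_mono \<open>y < n\<close> \<alpha>x[of y] \<open>\<alpha> y = b\<close> by auto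
        then show False
          using True \<open>b < c\<close> by simp
      qed
      then have "\<beta> x = b"
        using \<beta>_mono[of y x] \<beta>y \<open>x < n\<close> two_valued(1) \<open>a < b\<close> by auto
      then show ?thesis
        using True \<open>x < n\<close> \<alpha>x[of x] \<open>b < c\<close>
        by (simp add: truncate_at_def peak_part_def)
    next
      case False
      then show ?thesis
         using two_valued \<open>x < n\<close> \<alpha>x[of x] \<open>a < b\<close> \<open>b < c\<close>
        by (auto simp: truncate_at_def peak_part_def)
    qed
  next
    case False
    then show ?thesis
      using \<beta>_vanishes \<gamma>_vanishes by (simp add: truncate_at_def peak_part_def)
  qed
  then show "\<beta> = truncate_at n b \<alpha>" and "\<gamma> = peak_part n a c \<alpha>"
    by auto
qed

theorem proposition21:
  fixes n a b c :: nat and \<alpha> :: "nat \<Rightarrow> nat"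
  assumes "a < b" and "b < c" and "c < n"
    and "\<alpha> \<in> triangle_interior n a b c"
  shows "\<exists>!p. fst p \<in> str_set n a b \<and> snd p \<in> str_set n a c \<and> \<alpha> = max_add (fst p) (snd p)"
proof -
  have \<alpha>: "\<alpha> \<in> triangle n a b c"
    using assms(4) unfolding triangle_interior_def by blast
  obtain y where "y < n" and "\<alpha> y = b"
    using triangle_interior_hits_middle[OF assms(4)] .
  let ?w = "(truncate_at n b \<alpha>, peak_part n a c \<alpha>)"
  show ?thesis
  proof (rule ex1I[of _ ?w])
    show "fst ?w \<in> str_set n a b \<and> snd ?w \<in> str_set n a c \<and> \<alpha> = max_add (fst ?w) (snd ?w)"
      using truncate_at_in_str_set[OF \<alpha>] peak_part_in_str_set[OF \<alpha>]
        max_add_truncate_at_peak_part[OF \<alpha>] assms(1-3) by simp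
  next
    fix p
    assume "fst p \<in> str_set n a b \<and> snd p \<in> str_set n a c \<and> \<alpha> = max_add (fst p) (snd p)"
    then show "p = ?w"
      using max_add_str_set_unique[of "fst p" n a b "snd p" c \<alpha> y] assms(1,2) \<open>y < n\<close> \<open>\<alpha> y = b\<close>
      by (simp add: prod_eq_iff)
  qed
qed

end
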